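(* Let $\mathsf{cvp}$ be any conjunctive variable projection for quantifier-free linear integer arithmetic (with divisibility predicates). Define $\mathsf{tp}$ on transitions $\tau$ and models $\sigma\models\tau$ as follows. Let $x_\delta$ ($x\in\vec x$) be fresh variables, $\tau_{\land\delta}:=\tau\land\bigwedge_{x\in\vec x}x_\delta\doteq x'-x$, $\tau_\delta:=\mathsf{cvp}(\tau_{\land\delta},\ \sigma\uplus[x_\delta/\sigma(x'-x)\mid x\in\vec x],\ \{x_\delta\mid x\in\vec x\})$, and $\tau_{\mathsf{rec}}:=\tau_\delta[x_\delta/x'-x\mid x\in\vec x]$, whose literals are written in the form $t\bowtie0$ with $\bowtie\in\{\le,\ge,<,>,\doteq\}$ or $e\mid t$ with $e\in\mathbb{N}_+$, where $t=\sum_{x\in\vec x}c_x(x'-x)+c$ with $c_x,c\in\mathbb{Z}$. Let $n$ be a fresh variable. Then $\mathsf{tp}(\tau,\sigma)$ is the conjunction of: $n>0$; for each literal $\sum_{x}c_x(x'-x)+c\bowtie0$ of $\tau_{\mathsf{rec}}$, the literal $\sum_x c_x(x'-x)+n\cdot c\bowtie0$; for each literal $e\mid\sum_x c_x(x'-x)+c$ of $\tau_{\mathsf{rec}}$, the literal $e\mid\sum_x c_x(x'-x)+n\cdot c$; and the formulas $\mathsf{cvp}(\tau,\sigma,\vec x)$ and $\mathsf{cvp}(\tau,\sigma,\vec x')$. Then $\mathsf{tp}$ is a transitive projection.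
   Context: The theory is quantifier-free linear integer arithmetic over $\mathbb{Z}$, including divisibility literals $e\mid t$ ($e\in\mathbb{N}_+$, $t$ an integer linear term), with $\sigma\models e\mid t$ iff $\sigma(t)$ is a multiple of $e$. Fix disjoint vectors $\vec x=(x_1,\dots,x_d)$ (pre-variables) and $\vec x'=(x'_1,\dots,x'_d)$ (post-variables); other variables are extra variables. A formula $\tau$ induces a relation $\to_\tau$ on $\mathbb{Z}^d$: $\vec v\to_\tau\vec v'$ iff $\tau[\vec x/\vec v,\vec x'/\vec v']$ is satisfiable. A transition is a conjunction of literals with variables among $\vec x\cup\vec x'$. A valuation is a partial map from variables to $\mathbb{Z}$; $\sigma\models\psi$ means all variables of $\psi$ are in $\mathrm{dom}(\sigma)$ and $\sigma(\psi)$ is true; $\psi$ is consistent with $\sigma$ if $\sigma(\psi)$ is satisfiable. A conjunctive variable projection is a function $\mathsf{cvp}(\tau,\sigma,X)$ (formula, valuation, variable set) such that for all quantifier-free $\tau$, $X$ and $\sigma\models\tau$: (1) $\sigma\models\mathsf{cvp}(\tau,\sigma,X)$; (2) $\mathsf{cvp}(\tau,\sigma,X)\models\tau$; (3) $\{\mathsf{cvp}(\tau,\theta,X)\mid\theta\models\tau\}$ is finite; (4) the variables of $\mathsf{cvp}(\tau,\sigma,X)$ lie in $X\cap\mathcal V(\tau)$; (5) $\mathsf{cvp}(\tau,\sigma,X)$ is a conjunction of literals. A transitive projection is a function $\mathsf{tp}$ mapping (formula, valuation) to a quantifier-free formula such that for every transition $\tau$ and every $\sigma\models\tau$: (1) $\mathsf{tp}(\tau,\sigma)$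 is consistent with $\sigma$; (2) $\{\mathsf{tp}(\tau,\theta)\mid\theta\models\tau\}$ is finite; (3) the relation $\to_{\mathsf{tp}(\tau,\sigma)}$ is transitive. *)

theory Defs
  imports Main
begin

text \<open>Variables: pre-variables Pre i, post-variables Post i (the relevant ones are
  those with i < d), the fresh variables Delta i (for x_delta) and N (for n), and
  further extra variables Ext k.\<close>
datatype var = Pre nat | Post nat | Delta nat | N | Ext nat

datatype tm = Const int | V var | Add tm tm | Mul int tm

datatype rel = Le | Ge | Lt | Gt | Eq

datatype lit = Cmp rel tm | Dvd int tm

datatype fm = TT | FF | Lit lit | And fm fm | Or fm fm

fun tval :: "(var \<Rightarrow> int) \<Rightarrow> tm \<Rightarrow> int" where
  "tval \<rho> (Const c) = c"
| "tval \<rho> (V v) = \<rho> v"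
| "tval \<rho> (Add s t) = tval \<rho> s + tval \<rho> t"
| "tval \<rho> (Mul c t) = c * tval \<rho> t"

fun rval :: "rel \<Rightarrow> int \<Rightarrow> bool" where
  "rval Le k = (k \<le> 0)"
| "rval Ge k = (k \<ge> 0)"
| "rval Lt k = (k < 0)"
| "rval Gt k = (k > 0)"
| "rval Eq k = (k = 0)"

fun lval :: "(var \<Rightarrow> int) \<Rightarrow> lit \<Rightarrow> bool" where
  "lval \<rho> (Cmp r t) = rval r (tval \<rho> t)"
| "lval \<rho> (Dvd e t) = (e dvd tval \<rho> t)"

fun fval :: "(var \<Rightarrow> int) \<Rightarrow> fm \<Rightarrow> bool" where
  "fval \<rho> TT = True"
| "fval \<rho> FF = False"
| "fval \<rho> (Lit l) = lval \<rho> l"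
| "fval \<rho> (And a b) = (fval \<rho> a \<and> fval \<rho> b)"
| "fval \<rho> (Or a b) = (fval \<rho> a \<or> fval \<rho> b)"

fun tvars :: "tm \<Rightarrow> var set" where
  "tvars (Const c) = {}"
| "tvars (V v) = {v}"
| "tvars (Add s t) = tvars s \<union> tvars t"
| "tvars (Mul c t) = tvars t"

fun lvars :: "lit \<Rightarrow> var set" where
  "lvars (Cmp r t) = tvars t"
| "lvars (Dvd e t) = tvars t"

fun fvars :: "fm \<Rightarrow> var set" where
  "fvars TT = {}"
| "fvars FF = {}"
| "fvars (Lit l) = lvars l"
| "fvars (And a b) = fvars a \<union> fvars b"
| "fvars (Or a b) = fvars a \<union> fvars b"

fun wf_lit :: "lit \<Rightarrow> bool" where
  "wf_lit (Cmp r t) = True"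
| "wf_lit (Dvd e t) = (e > 0)"

fun wf_fm :: "fm \<Rightarrow> bool" where
  "wf_fm (Lit l) = wf_lit l"
| "wf_fm (And a b) = (wf_fm a \<and> wf_fm b)"
| "wf_fm (Or a b) = (wf_fm a \<and> wf_fm b)"
| "wf_fm _ = True"

fun conj_lits :: "fm \<Rightarrow> bool" where
  "conj_lits TT = True"
| "conj_lits (Lit l) = wf_lit l"
| "conj_lits (And a b) = (conj_lits a \<and> conj_lits b)"
| "conj_lits _ = False"

type_synonym valuation = "var \<Rightarrow> int option"

definition models :: "valuation \<Rightarrow> fm \<Rightarrow> bool" where
  "models \<sigma> \<psi> \<longleftrightarrow> fvars \<psi> \<subseteq> dom \<sigma> \<and> fval (\<lambda>v. the (\<sigma> v)) \<psi>"

definition consistent :: "valuation \<Rightarrow> fm \<Rightarrow> bool" where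
  "consistent \<sigma> \<psi> \<longleftrightarrow> (\<exists>\<rho>. (\<forall>v\<in>dom \<sigma>. \<sigma> v = Some (\<rho> v)) \<and> fval \<rho> \<psi>)"

text \<open>Projection entailment \<psi> \<Turnstile> \<exists>(vars \<tau> - X). \<tau>: every model of \<psi> agrees on X
  with some model of \<tau>.\<close>
definition proj_entails :: "fm \<Rightarrow> var set \<Rightarrow> fm \<Rightarrow> bool" where
  "proj_entails \<psi> X \<tau> \<longleftrightarrow>
     (\<forall>\<rho>. fval \<rho> \<psi> \<longrightarrow> (\<exists>\<rho>'. (\<forall>v\<in>X. \<rho>' v = \<rho> v) \<and> fval \<rho>' \<tau>))"

definition is_cvp :: "(fm \<Rightarrow> valuation \<Rightarrow> var set \<Rightarrow> fm) \<Rightarrow> bool" where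
  "is_cvp cvp \<longleftrightarrow>
     (\<forall>\<tau> X \<sigma>. wf_fm \<tau> \<and> models \<sigma> \<tau> \<longrightarrow>
        models \<sigma> (cvp \<tau> \<sigma> X)
      \<and> proj_entails (cvp \<tau> \<sigma> X) X \<tau>
      \<and> finite {cvp \<tau> \<theta> X | \<theta>. models \<theta> \<tau>}
      \<and> fvars (cvp \<tau> \<sigma> X) \<subseteq> X \<inter> fvars \<tau>
      \<and> conj_lits (cvp \<tau> \<sigma> X))"

definition pre_vars :: "nat \<Rightarrow> var set" where
  "pre_vars d = {Pre i | i. i < d}"

definition post_vars :: "nat \<Rightarrow> var set" where
  "post_vars d = {Post i | i. i < d}"

definition delta_vars :: "nat \<Rightarrow> var set" where
  "delta_vars d = {Delta i | i. i < d}"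

definition is_transition :: "nat \<Rightarrow> fm \<Rightarrow> bool" where
  "is_transition d \<tau> \<longleftrightarrow> conj_lits \<tau> \<and> fvars \<tau> \<subseteq> pre_vars d \<union> post_vars d"

text \<open>Models of a transition as used in the construction: \<sigma> \<Turnstile> \<tau>, \<sigma> is defined on all
  pre- and post-variables (so that \<sigma>(x' - x) makes sense) and the fresh variables
  x_delta and n are not in the domain of \<sigma>.\<close>
definition trans_model :: "nat \<Rightarrow> valuation \<Rightarrow> fm \<Rightarrow> bool" where
  "trans_model d \<sigma> \<tau> \<longleftrightarrow> models \<sigma> \<tau> \<and> pre_vars d \<union> post_vars d \<subseteq> dom \<sigma>
      \<and> N \<notin> dom \<sigma> \<and> (\<forall>i. Delta i \<notin> dom \<sigma>)"

text \<open>v \<rightarrow>_\<tau> v' (vectors in Z^d as integer lists of length d).\<close>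
definition induced_rel :: "nat \<Rightarrow> fm \<Rightarrow> int list \<Rightarrow> int list \<Rightarrow> bool" where
  "induced_rel d \<tau> v v' \<longleftrightarrow> length v = d \<and> length v' = d \<and>
     (\<exists>\<rho>. (\<forall>i<d. \<rho> (Pre i) = v ! i \<and> \<rho> (Post i) = v' ! i) \<and> fval \<rho> \<tau>)"

definition is_tp :: "nat \<Rightarrow> (fm \<Rightarrow> valuation \<Rightarrow> fm) \<Rightarrow> bool" where
  "is_tp d tp \<longleftrightarrow>
     (\<forall>\<tau> \<sigma>. is_transition d \<tau> \<and> trans_model d \<sigma> \<tau> \<longrightarrow>
        consistent \<sigma> (tp \<tau> \<sigma>)
      \<and> finite {tp \<tau> \<theta> | \<theta>. trans_model d \<theta> \<tau>}
      \<and> transp (induced_rel d (tp \<tau> \<sigma>)))"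

definition minus_tm :: "tm \<Rightarrow> tm \<Rightarrow> tm" where
  "minus_tm s t = Add s (Mul (-1) t)"

definition tau_and_delta :: "nat \<Rightarrow> fm \<Rightarrow> fm" where
  "tau_and_delta d \<tau> =
     foldr (\<lambda>i \<phi>. And \<phi> (Lit (Cmp Eq (minus_tm (V (Delta i)) (minus_tm (V (Post i)) (V (Pre i)))))))
       [0..<d] \<tau>"

definition ext_val :: "nat \<Rightarrow> valuation \<Rightarrow> valuation" where
  "ext_val d \<sigma> = (\<lambda>v. case v of
      Delta i \<Rightarrow> (if i < d then Some (the (\<sigma> (Post i)) - the (\<sigma> (Pre i))) else \<sigma> v)
    | _ \<Rightarrow> \<sigma> v)"

text \<open>Maps a term t = \<Sum> c_x x_delta + c to \<Sum> c_x (x' - x) + n * c, i.e. performs the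
  substitution x_delta := x' - x (giving \<tau>_rec) and replaces the constant c by n * c.
  (The map is linear, so the result is the described term independently of how t is
  written.)\<close>
fun hom_tm :: "tm \<Rightarrow> tm" where
  "hom_tm (Const c) = Mul c (V N)"
| "hom_tm (V (Delta i)) = minus_tm (V (Post i)) (V (Pre i))"
| "hom_tm (V v) = V v"
| "hom_tm (Add s t) = Add (hom_tm s) (hom_tm t)"
| "hom_tm (Mul c t) = Mul c (hom_tm t)"

fun hom_lit :: "lit \<Rightarrow> lit" where
  "hom_lit (Cmp r t) = Cmp r (hom_tm t)"
| "hom_lit (Dvd e t) = Dvd e (hom_tm t)"

fun hom_fm :: "fm \<Rightarrow> fm" where
  "hom_fm (Lit l) = Lit (hom_lit l)"
| "hom_fm (And a b) = And (hom_fm a) (hom_fm b)"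
| "hom_fm (Or a b) = Or (hom_fm a) (hom_fm b)"
| "hom_fm \<phi> = \<phi>"

definition tp_of :: "(fm \<Rightarrow> valuation \<Rightarrow> var set \<Rightarrow> fm) \<Rightarrow> nat \<Rightarrow> fm \<Rightarrow> valuation \<Rightarrow> fm" where
  "tp_of cvp d \<tau> \<sigma> =
     (let \<tau>\<delta> = cvp (tau_and_delta d \<tau>) (ext_val d \<sigma>) (delta_vars d)
      in And (Lit (Cmp Gt (V N)))
           (And (hom_fm \<tau>\<delta>)
             (And (cvp \<tau> \<sigma> (pre_vars d)) (cvp \<tau> \<sigma> (post_vars d)))))"

end

theory Submission
  imports Defs
begin

text \<open>A model of tp(\<tau>, \<sigma>) is a step whose displacement x' - x satisfies \<tau>_rec with all
  constants scaled by some n > 0, whose pre-state satisfies cvp(\<tau>, \<sigma>, x) and whose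
  post-state satisfies cvp(\<tau>, \<sigma>, x'). Two consecutive such steps (with n1 and n2)
  compose to one with n1 + n2: the scaled literals are homogeneous in the displacement
  and n, so a conjunction of them is closed under addition of models, and the pre- and
  post-state constraints are inherited from the first and the second step. Consistency is
  witnessed by n = 1, where the scaled \<tau>_rec is \<tau>_rec itself, and finiteness is inherited
  from the three calls of cvp.\<close>

lemma tval_cong: "(\<forall>v\<in>tvars t. \<rho> v = \<rho>' v) \<Longrightarrow> tval \<rho> t = tval \<rho>' t"
  by (induction t) auto

lemma lval_cong: "(\<forall>v\<in>lvars l. \<rho> v = \<rho>' v) \<Longrightarrow> lval \<rho> l = lval \<rho>' l"
  by (cases l) (auto dest: tval_cong)

lemma fval_cong: "(\<forall>v\<in>fvars \<phi>. \<rho> v = \<rho>' v) \<Longrightarrow> fval \<rho> \<phi> = fval \<rho>' \<phi>"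
  by (induction \<phi>) (auto dest: lval_cong)

lemma conj_lits_imp_wf_fm: "conj_lits \<phi> \<Longrightarrow> wf_fm \<phi>"
  by (induction \<phi>) auto

lemma models_imp_fval:
  assumes "models \<sigma> \<phi>" "\<forall>v\<in>dom \<sigma>. \<sigma> v = Some (\<rho> v)"
  shows "fval \<rho> \<phi>"
proof -
  have "fval (\<lambda>v. the (\<sigma> v)) \<phi>" "fvars \<phi> \<subseteq> dom \<sigma>"
    using assms(1) by (auto simp: models_def)
  then show ?thesis
    using assms(2) fval_cong[of \<phi> \<rho> "\<lambda>v. the (\<sigma> v)"] by force
qed

lemma models_map_le:
  assumes "models \<sigma> \<phi>" "\<sigma> \<subseteq>\<^sub>m \<sigma>'"
  shows "models \<sigma>' \<phi>"
proof -
  have "fvars \<phi> \<subseteq> dom \<sigma>" "fval (\<lambda>v. the (\<sigma> v)) \<phi>"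
    using assms(1) by (auto simp: models_def)
  moreover from this have "fval (\<lambda>v. the (\<sigma>' v)) \<phi> = fval (\<lambda>v. the (\<sigma> v)) \<phi>"
    using assms(2) by (intro fval_cong) (force simp: map_le_def)
  ultimately show ?thesis
    using map_le_implies_dom_le[OF assms(2)] by (auto simp: models_def)
qed

lemma ext_val_other [simp]: "(\<And>i. v \<noteq> Delta i) \<Longrightarrow> ext_val d \<sigma> v = \<sigma> v"
  by (auto simp: ext_val_def split: var.splits)

lemma ext_val_Delta [simp]:
  "i < d \<Longrightarrow> ext_val d \<sigma> (Delta i) = Some (the (\<sigma> (Post i)) - the (\<sigma> (Pre i)))"
  by (simp add: ext_val_def)

lemma map_le_ext_val: "(\<And>i. Delta i \<notin> dom \<sigma>) \<Longrightarrow> \<sigma> \<subseteq>\<^sub>m ext_val d \<sigma>"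
  unfolding map_le_def by (metis ext_val_other)

definition and_delta_eq :: "nat \<Rightarrow> fm \<Rightarrow> fm" where
  "and_delta_eq i \<phi> =
     And \<phi> (Lit (Cmp Eq (minus_tm (V (Delta i)) (minus_tm (V (Post i)) (V (Pre i))))))"

lemma tau_and_delta_eq_foldr: "tau_and_delta d \<tau> = foldr and_delta_eq [0..<d] \<tau>"
  unfolding tau_and_delta_def and_delta_eq_def by simp

lemma fvars_foldr_and_delta_eq:
  "fvars (foldr and_delta_eq is \<tau>) = fvars \<tau> \<union> (\<Union>i\<in>set is. {Delta i, Post i, Pre i})"
  by (induction "is") (auto simp: and_delta_eq_def minus_tm_def)

lemma fval_foldr_and_delta_eq:
  "fval \<rho> (foldr and_delta_eq is \<tau>) \<longleftrightarrow>
     fval \<rho> \<tau> \<and> (\<forall>i\<in>set is. \<rho> (Delta i) = \<rho> (Post i) - \<rho> (Pre i))"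
  by (induction "is") (auto simp: and_delta_eq_def minus_tm_def)

lemma wf_fm_foldr_and_delta_eq: "wf_fm (foldr and_delta_eq is \<tau>) = wf_fm \<tau>"
  by (induction "is") (auto simp: and_delta_eq_def)

lemma wf_fm_tau_and_delta: "wf_fm (tau_and_delta d \<tau>) = wf_fm \<tau>"
  by (simp add: tau_and_delta_eq_foldr wf_fm_foldr_and_delta_eq)

lemma models_tau_and_delta:
  assumes "trans_model d \<sigma> \<tau>"
  shows "models (ext_val d \<sigma>) (tau_and_delta d \<tau>)"
proof -
  have dom: "pre_vars d \<union> post_vars d \<subseteq> dom \<sigma>" and "\<And>i. Delta i \<notin> dom \<sigma>"
    using assms by (auto simp: trans_model_def)
  then have "models (ext_val d \<sigma>) \<tau>"
    using assms map_le_ext_val models_map_le by (auto simp: trans_model_def)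
  moreover have "{Delta i, Post i, Pre i} \<subseteq> dom (ext_val d \<sigma>)" if "i < d" for i
    using dom that by (auto simp: pre_vars_def post_vars_def)
  ultimately show ?thesis
    by (simp add: models_def tau_and_delta_eq_foldr fvars_foldr_and_delta_eq
        fval_foldr_and_delta_eq UN_subset_iff del: insert_subset)
qed

lemma tval_hom_tm_unit:
  assumes "tvars t \<subseteq> delta_vars d" "\<rho> N = 1"
    "\<forall>i<d. \<rho> (Delta i) = \<rho> (Post i) - \<rho> (Pre i)"
  shows "tval \<rho> (hom_tm t) = tval \<rho> t"
  using assms by (induction t rule: hom_tm.induct) (auto simp: delta_vars_def minus_tm_def)

lemma fval_hom_fm_unit:
  assumes "fvars \<phi> \<subseteq> delta_vars d" "\<rho> N = 1"
    "\<forall>i<d. \<rho> (Delta i) = \<rho> (Post i) - \<rho> (Pre i)"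
  shows "fval \<rho> (hom_fm \<phi>) = fval \<rho> \<phi>"
  using assms
proof (induction \<phi> rule: hom_fm.induct)
  case (1 l)
  then show ?case
    by (cases l) (auto simp: tval_hom_tm_unit)
qed auto

lemma tval_hom_tm_add:
  assumes "tvars t \<subseteq> delta_vars d" "\<rho> N = \<rho>\<^sub>1 N + \<rho>\<^sub>2 N"
    "\<forall>i<d. \<rho> (Post i) - \<rho> (Pre i) =
       (\<rho>\<^sub>1 (Post i) - \<rho>\<^sub>1 (Pre i)) + (\<rho>\<^sub>2 (Post i) - \<rho>\<^sub>2 (Pre i))"
  shows "tval \<rho> (hom_tm t) = tval \<rho>\<^sub>1 (hom_tm t) + tval \<rho>\<^sub>2 (hom_tm t)"
  using assms by (induction t rule: hom_tm.induct)
    (auto simp: delta_vars_def minus_tm_def algebra_simps)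

text \<open>Each literal t \<bowtie> 0 and e | t is preserved under adding the values of t; this is
  where it matters that cvp returns a conjunction of literals.\<close>

lemma fval_hom_fm_add:
  assumes "conj_lits \<phi>" "fvars \<phi> \<subseteq> delta_vars d" "\<rho> N = \<rho>\<^sub>1 N + \<rho>\<^sub>2 N"
    "\<forall>i<d. \<rho> (Post i) - \<rho> (Pre i) =
       (\<rho>\<^sub>1 (Post i) - \<rho>\<^sub>1 (Pre i)) + (\<rho>\<^sub>2 (Post i) - \<rho>\<^sub>2 (Pre i))"
    "fval \<rho>\<^sub>1 (hom_fm \<phi>)" "fval \<rho>\<^sub>2 (hom_fm \<phi>)"
  shows "fval \<rho> (hom_fm \<phi>)"
  using assms
proof (induction \<phi> rule: hom_fm.induct)
  case (1 l)
  then show ?case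
  proof (cases l)
    case (Cmp r t)
    with 1 have "tval \<rho> (hom_tm t) = tval \<rho>\<^sub>1 (hom_tm t) + tval \<rho>\<^sub>2 (hom_tm t)"
      by (intro tval_hom_tm_add[where d = d]) auto
    with 1 Cmp show ?thesis by (cases r) auto
  next
    case (Dvd e t)
    with 1 have "tval \<rho> (hom_tm t) = tval \<rho>\<^sub>1 (hom_tm t) + tval \<rho>\<^sub>2 (hom_tm t)"
      by (intro tval_hom_tm_add[where d = d]) auto
    with 1 Dvd show ?thesis by auto
  qed
qed auto

definition tp_conj :: "fm \<Rightarrow> fm \<Rightarrow> fm \<Rightarrow> fm" where
  "tp_conj \<phi> \<psi> \<psi>' = And (Lit (Cmp Gt (V N))) (And (hom_fm \<phi>) (And \<psi> \<psi>'))"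

lemma fval_tp_conj:
  "fval \<rho> (tp_conj \<phi> \<psi> \<psi>') \<longleftrightarrow> \<rho> N > 0 \<and> fval \<rho> (hom_fm \<phi>) \<and> fval \<rho> \<psi> \<and> fval \<rho> \<psi>'"
  by (simp add: tp_conj_def)

lemma tp_of_eq_tp_conj:
  "tp_of cvp d \<tau> \<sigma> =
     tp_conj (cvp (tau_and_delta d \<tau>) (ext_val d \<sigma>) (delta_vars d))
       (cvp \<tau> \<sigma> (pre_vars d)) (cvp \<tau> \<sigma> (post_vars d))"
  by (simp add: tp_of_def tp_conj_def)

lemma consistent_tp_conj:
  assumes "N \<notin> dom \<sigma>" "\<And>i. Delta i \<notin> dom \<sigma>"
    and "models (ext_val d \<sigma>) \<phi>" "fvars \<phi> \<subseteq> delta_vars d"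
    and "models \<sigma> \<psi>" "models \<sigma> \<psi>'"
  shows "consistent \<sigma> (tp_conj \<phi> \<psi> \<psi>')"
proof -
  define \<rho> where "\<rho> v = (if v = N then 1 else the (ext_val d \<sigma> v))" for v
  have agree_ext: "\<forall>v\<in>dom (ext_val d \<sigma>). ext_val d \<sigma> v = Some (\<rho> v)"
    using assms(1) by (auto simp: \<rho>_def)
  have agree: "\<forall>v\<in>dom \<sigma>. \<sigma> v = Some (\<rho> v)"
  proof
    fix v assume "v \<in> dom \<sigma>"
    moreover from this have "v \<noteq> N" "\<And>i. v \<noteq> Delta i"
      using assms(1,2) by auto
    ultimately show "\<sigma> v = Some (\<rho> v)" by (auto simp: \<rho>_def)
  qed
  have "\<rho> N = 1" "\<forall>i<d. \<rho> (Delta i) = \<rho> (Post i) - \<rho> (Pre i)"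
    by (simp_all add: \<rho>_def)
  then have "fval \<rho> (hom_fm \<phi>)"
    using fval_hom_fm_unit[OF assms(4)] models_imp_fval[OF assms(3) agree_ext] by simp
  moreover have "fval \<rho> \<psi>" "fval \<rho> \<psi>'"
    using models_imp_fval assms(5,6) agree by blast+
  ultimately show ?thesis
    unfolding consistent_def fval_tp_conj using agree \<open>\<rho> N = 1\<close>
    by (intro exI[of _ \<rho>]) simp
qed

lemma transp_induced_rel_tp_conj:
  assumes "conj_lits \<phi>" "fvars \<phi> \<subseteq> delta_vars d"
    and "fvars \<psi> \<subseteq> pre_vars d" "fvars \<psi>' \<subseteq> post_vars d"
  shows "transp (induced_rel d (tp_conj \<phi> \<psi> \<psi>'))"
proof (rule transpI)
  fix u v w
  assume "induced_rel d (tp_conj \<phi> \<psi> \<psi>') u v" "induced_rel d (tp_conj \<phi> \<psi> \<psi>') v w"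
  then obtain \<rho>\<^sub>1 \<rho>\<^sub>2 where
    lengths: "length u = d" "length w = d" and
    \<rho>\<^sub>1: "\<forall>i<d. \<rho>\<^sub>1 (Pre i) = u ! i \<and> \<rho>\<^sub>1 (Post i) = v ! i" "fval \<rho>\<^sub>1 (tp_conj \<phi> \<psi> \<psi>')" and
    \<rho>\<^sub>2: "\<forall>i<d. \<rho>\<^sub>2 (Pre i) = v ! i \<and> \<rho>\<^sub>2 (Post i) = w ! i" "fval \<rho>\<^sub>2 (tp_conj \<phi> \<psi> \<psi>')"
    unfolding induced_rel_def by blast
  define \<rho> where "\<rho> x = (case x of Pre i \<Rightarrow> \<rho>\<^sub>1 (Pre i) | Post i \<Rightarrow> \<rho>\<^sub>2 (Post i)
    | N \<Rightarrow> \<rho>\<^sub>1 N + \<rho>\<^sub>2 N | _ \<Rightarrow> 0)" for x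
  have "fval \<rho> (hom_fm \<phi>)"
    using \<rho>\<^sub>1 \<rho>\<^sub>2 by (intro fval_hom_fm_add[OF assms(1,2), of \<rho> \<rho>\<^sub>1 \<rho>\<^sub>2])
      (auto simp: \<rho>_def fval_tp_conj)
  moreover have "fval \<rho> \<psi> = fval \<rho>\<^sub>1 \<psi>"
    using assms(3) by (intro fval_cong) (auto simp: \<rho>_def pre_vars_def)
  moreover have "fval \<rho> \<psi>' = fval \<rho>\<^sub>2 \<psi>'"
    using assms(4) by (intro fval_cong) (auto simp: \<rho>_def post_vars_def)
  ultimately have "fval \<rho> (tp_conj \<phi> \<psi> \<psi>')"
    using \<rho>\<^sub>1(2) \<rho>\<^sub>2(2) by (simp add: fval_tp_conj \<rho>_def)
  moreover have "\<forall>i<d. \<rho> (Pre i) = u ! i \<and> \<rho> (Post i) = w ! i"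
    using \<rho>\<^sub>1(1) \<rho>\<^sub>2(1) by (simp add: \<rho>_def)
  ultimately show "induced_rel d (tp_conj \<phi> \<psi> \<psi>') u w"
    using lengths unfolding induced_rel_def by blast
qed

lemma is_cvpD:
  assumes "is_cvp cvp" "wf_fm \<tau>" "models \<sigma> \<tau>"
  shows "models \<sigma> (cvp \<tau> \<sigma> X)" "fvars (cvp \<tau> \<sigma> X) \<subseteq> X" "conj_lits (cvp \<tau> \<sigma> X)"
    "finite {cvp \<tau> \<theta> X | \<theta>. models \<theta> \<tau>}"
  using assms unfolding is_cvp_def by blast+

lemma finite_tp_of:
  assumes "is_cvp cvp" "wf_fm \<tau>" "trans_model d \<sigma> \<tau>"
  shows "finite {tp_of cvp d \<tau> \<theta> | \<theta>. trans_model d \<theta> \<tau>}"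
proof -
  let ?\<tau>\<delta> = "tau_and_delta d \<tau>"
  define A where "A = {cvp ?\<tau>\<delta> \<theta> (delta_vars d) | \<theta>. models \<theta> ?\<tau>\<delta>}"
  define B where "B X = {cvp \<tau> \<theta> X | \<theta>. models \<theta> \<tau>}" for X
  have "wf_fm ?\<tau>\<delta>" "models (ext_val d \<sigma>) ?\<tau>\<delta>"
    using assms(2,3) by (simp_all add: wf_fm_tau_and_delta models_tau_and_delta)
  then have "finite A"
    unfolding A_def by (rule is_cvpD(4)[OF assms(1)])
  have "models \<sigma> \<tau>" using assms(3) by (simp add: trans_model_def)
  then have "finite (B X)" for X
    unfolding B_def by (rule is_cvpD(4)[OF assms(1,2)])
  have "{tp_of cvp d \<tau> \<theta> | \<theta>. trans_model d \<theta> \<tau>} \<subseteq>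
      (\<lambda>(\<phi>, \<psi>, \<psi>'). tp_conj \<phi> \<psi> \<psi>') ` (A \<times> B (pre_vars d) \<times> B (post_vars d))"
  proof
    fix f assume "f \<in> {tp_of cvp d \<tau> \<theta> | \<theta>. trans_model d \<theta> \<tau>}"
    then obtain \<theta> where "trans_model d \<theta> \<tau>" and f: "f = tp_of cvp d \<tau> \<theta>" by blast
    then have "models (ext_val d \<theta>) ?\<tau>\<delta>" "models \<theta> \<tau>"
      by (simp_all add: models_tau_and_delta trans_model_def)
    then show "f \<in> (\<lambda>(\<phi>, \<psi>, \<psi>'). tp_conj \<phi> \<psi> \<psi>') ` (A \<times> B (pre_vars d) \<times> B (post_vars d))"
      unfolding f tp_of_eq_tp_conj A_def B_def
      by (intro image_eqI[where x = "(cvp ?\<tau>\<delta> (ext_val d \<theta>) (delta_vars d),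
          cvp \<tau> \<theta> (pre_vars d), cvp \<tau> \<theta> (post_vars d))"]) auto
  qed
  with \<open>finite A\<close> \<open>\<And>X. finite (B X)\<close> show ?thesis
    by (meson finite_SigmaI finite_imageI finite_subset)
qed

theorem theorem2:
  fixes cvp :: "fm \<Rightarrow> valuation \<Rightarrow> var set \<Rightarrow> fm" and d :: nat
  assumes "is_cvp cvp"
  shows "is_tp d (tp_of cvp d)"
  unfolding is_tp_def
proof (intro allI impI conjI)
  fix \<tau> \<sigma>
  assume "is_transition d \<tau> \<and> trans_model d \<sigma> \<tau>"
  then have wf: "wf_fm \<tau>" and \<sigma>: "trans_model d \<sigma> \<tau>"
    by (auto simp: is_transition_def conj_lits_imp_wf_fm)
  have "models \<sigma> \<tau>" "models (ext_val d \<sigma>) (tau_and_delta d \<tau>)" "wf_fm (tau_and_delta d \<tau>)"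
    using \<sigma> wf models_tau_and_delta wf_fm_tau_and_delta by (auto simp: trans_model_def)
  note cvp\<^sub>\<tau> = is_cvpD[OF assms wf \<open>models \<sigma> \<tau>\<close>]
    and cvp\<^sub>\<delta> = is_cvpD[OF assms \<open>wf_fm (tau_and_delta d \<tau>)\<close> \<open>models (ext_val d \<sigma>) _\<close>]
  have "N \<notin> dom \<sigma>" "\<And>i. Delta i \<notin> dom \<sigma>"
    using \<sigma> by (auto simp: trans_model_def)
  then show "consistent \<sigma> (tp_of cvp d \<tau> \<sigma>)"
    unfolding tp_of_eq_tp_conj
    using consistent_tp_conj cvp\<^sub>\<tau>(1) cvp\<^sub>\<delta>(1,2) by blast
  show "finite {tp_of cvp d \<tau> \<theta> | \<theta>. trans_model d \<theta> \<tau>}"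
    using finite_tp_of[OF assms wf \<sigma>] .
  show "transp (induced_rel d (tp_of cvp d \<tau> \<sigma>))"
    unfolding tp_of_eq_tp_conj
    using cvp\<^sub>\<tau>(2) cvp\<^sub>\<delta>(2,3) by (intro transp_induced_rel_tp_conj)
qed

end
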